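(* Let $D=\operatorname{diag}(d_1,\dots,d_n)$ with $d_i>0$, $Q$ a positive diagonal $n\times n$ matrix, $1\le p\le\infty$, and $L\in\mathbb{R}^{N\times N}$ symmetric with nonpositive off-diagonal entries and $L\mathbf{1}=0$. Then $M^+_{p,Q}[-L\otimes D]=0$.
   Context: On $\mathbb{R}^{nN}$, with $u=(u_1^T,\dots,u_N^T)^T$, $\|u\|_{p,Q}=\big\|(\|Qu_1\|_p,\dots,\|Qu_N\|_p)^T\big\|_p$, and $M^+_{p,Q}[f]=\sup_{u\neq v}\lim_{h\to0^+}\frac1h\left(\frac{\|u-v+h(f(u)-f(v))\|_{p,Q}}{\|u-v\|_{p,Q}}-1\right)$, applied to the linear map $u\mapsto-(L\otimes D)u$. *)

theory Defs
  imports "HOL-Analysis.Analysis"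
begin

definition pnorm :: "ereal \<Rightarrow> real^'n \<Rightarrow> real" where
  "pnorm p x = (if p = \<infinity> then Max (range (\<lambda>i. \<bar>x $ i\<bar>))
               else (\<Sum>i\<in>UNIV. \<bar>x $ i\<bar> powr real_of_ereal p) powr (1 / real_of_ereal p))"

text \<open>Block vectors u = (u_1,...,u_N) with u_i in R^n are elements of real^'n^'N, u $ i = u_i.
  norm_pQ p Q u = p-norm of the vector (p-norm of Q u_i)_i.\<close>
definition norm_pQ :: "ereal \<Rightarrow> real^'n^'n \<Rightarrow> real^'n^'N \<Rightarrow> real" where
  "norm_pQ p Q u = pnorm p (\<chi> i. pnorm p (Q *v (u $ i)))"

definition M_plus :: "ereal \<Rightarrow> real^'n^'n \<Rightarrow> (real^'n^'N \<Rightarrow> real^'n^'N) \<Rightarrow> real" where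
  "M_plus p Q f = Sup {Lim (at_right 0)
        (\<lambda>h::real. (norm_pQ p Q (u - v + h *\<^sub>R (f u - f v)) / norm_pQ p Q (u - v) - 1) / h)
      | u v. u \<noteq> v}"

definition kron_apply :: "real^'N^'N \<Rightarrow> real^'n^'n \<Rightarrow> real^'n^'N \<Rightarrow> real^'n^'N" where
  "kron_apply L D u = (\<chi> i. \<Sum>j\<in>UNIV. L $ i $ j *\<^sub>R (D *v (u $ j)))"

definition is_diag :: "real^'n^'n \<Rightarrow> bool" where
  "is_diag A \<longleftrightarrow> (\<forall>i j. i \<noteq> j \<longrightarrow> A $ i $ j = 0)"

end

theory Submission
  imports Defs
begin

text \<open>For diagonal \<open>D\<close> and \<open>Q\<close> the Euler step \<open>u \<mapsto> u - h (L \<otimes> D) u\<close> acts on the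
  \<open>k\<close>-th components of the blocks through the matrix \<open>I - h d\<^sub>k L\<close>. For small \<open>h \<ge> 0\<close> this
  matrix is doubly stochastic, because \<open>L\<close> is symmetric with nonpositive off-diagonal entries
  and zero row sums, and doubly stochastic matrices do not increase the \<open>Q\<close>-weighted \<open>p\<close>-norm
  (by Jensen's inequality when \<open>p < \<infinity>\<close>). Hence every one-sided derivative in the definition of
  \<open>M\<^sup>+\<close> is at most \<open>0\<close>; it exists because the \<open>p\<close>-th power of \<open>h \<mapsto> \<parallel>x + h b\<parallel>\<close> (the norm
  itself when \<open>p = \<infinity>\<close>) is convex. The bound is attained at a constant block vector, which
  lies in the kernel of \<open>L \<otimes> D\<close>.\<close>

lemma convex_on_abs_powr:
  fixes P :: real
  assumes "P \<ge> 1"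
  shows "convex_on UNIV (\<lambda>t::real. \<bar>t\<bar> powr P)"
proof (rule convex_onI)
  fix t x y :: real
  assume t: "0 < t" "t < 1"
  have scaled: "(s * z) powr P \<le> s * z powr P" if "0 \<le> s" "s \<le> 1" "0 \<le> z" for s z :: real
  proof -
    have "(s * z) powr P = s powr P * z powr P" using that by (simp add: powr_mult)
    also have "\<dots> \<le> s powr 1 * z powr P"
      using that assms by (intro mult_right_mono powr_mono') auto
    finally show ?thesis using that by simp
  qed
  have "\<bar>(1 - t) * x + t * y\<bar> \<le> (1 - t) * \<bar>x\<bar> + t * \<bar>y\<bar>"
    using abs_triangle_ineq[of "(1 - t) * x" "t * y"] t by (simp add: abs_mult)
  then have "\<bar>(1 - t) * x + t * y\<bar> powr P \<le> ((1 - t) * \<bar>x\<bar> + t * \<bar>y\<bar>) powr P"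
    using assms by (intro powr_mono2) auto
  also have "\<dots> \<le> (1 - t) * \<bar>x\<bar> powr P + t * \<bar>y\<bar> powr P"
  proof (cases "x = 0 \<or> y = 0")
    \<comment> \<open>\<open>powr_convex\<close> only covers the open half-line\<close>
    case True
    then show ?thesis using scaled[of t "\<bar>y\<bar>"] scaled[of "1 - t" "\<bar>x\<bar>"] t by auto
  next
    case False
    then show ?thesis using convex_onD[OF powr_convex[OF assms], of t "\<bar>x\<bar>" "\<bar>y\<bar>"] t by auto
  qed
  finally show "\<bar>(1 - t) *\<^sub>R x + t *\<^sub>R y\<bar> powr P \<le> (1 - t) * \<bar>x\<bar> powr P + t * \<bar>y\<bar> powr P"
    by simp
qed auto

lemma convex_on_comp_affine:
  fixes \<psi> :: "real \<Rightarrow> real"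
  assumes "convex_on UNIV \<psi>"
  shows "convex_on UNIV (\<lambda>h. \<psi> (a + h * b))"
proof (rule convex_onI)
  fix t x y :: real
  assume "0 < t" "t < 1"
  moreover have "a + ((1 - t) *\<^sub>R x + t *\<^sub>R y) * b = (1 - t) *\<^sub>R (a + x * b) + t *\<^sub>R (a + y * b)"
    by (simp add: algebra_simps)
  ultimately show "\<psi> (a + ((1 - t) *\<^sub>R x + t *\<^sub>R y) * b) \<le> (1 - t) * \<psi> (a + x * b) + t * \<psi> (a + y * b)"
    using convex_onD[OF assms, of t] by auto
qed auto

lemma convex_on_sum_fun:
  assumes "finite I" "convex C" "\<And>i. i \<in> I \<Longrightarrow> convex_on C (g i)"
  shows "convex_on C (\<lambda>x. \<Sum>i\<in>I. g i x)"
  using assms by (induction I rule: finite_induct) (auto simp: convex_on_const)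

lemma convex_on_Max_range:
  fixes g :: "'i::finite \<Rightarrow> 'a::real_vector \<Rightarrow> real"
  assumes "convex C" "\<And>i. convex_on C (g i)"
  shows "convex_on C (\<lambda>x. Max (range (\<lambda>i. g i x)))"
proof (rule convex_onI)
  fix t :: real and x y
  assume t: "0 < t" "t < 1" and xy: "x \<in> C" "y \<in> C"
  have "g i ((1 - t) *\<^sub>R x + t *\<^sub>R y) \<le> (1 - t) * Max (range (\<lambda>i. g i x)) + t * Max (range (\<lambda>i. g i y))"
    for i
  proof -
    have "g i ((1 - t) *\<^sub>R x + t *\<^sub>R y) \<le> (1 - t) * g i x + t * g i y"
      using convex_onD[OF assms(2)] t xy by auto
    also have "\<dots> \<le> (1 - t) * Max (range (\<lambda>i. g i x)) + t * Max (range (\<lambda>i. g i y))"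
      using t by (intro add_mono mult_left_mono) auto
    finally show ?thesis .
  qed
  then show "Max (range (\<lambda>i. g i ((1 - t) *\<^sub>R x + t *\<^sub>R y)))
      \<le> (1 - t) * Max (range (\<lambda>i. g i x)) + t * Max (range (\<lambda>i. g i y))"
    by auto
qed (use assms in auto)

lemma convex_on_right_slope_converges:
  fixes f :: "real \<Rightarrow> real"
  assumes "convex_on UNIV f"
  shows "\<exists>D. ((\<lambda>h. (f h - f 0) / h) \<longlongrightarrow> D) (at_right 0)"
proof -
  have mono: "(f a - f 0) / a \<le> (f b - f 0) / b" if "0 < a" "a < b" for a b
    using convex_on_slope_le(1)[OF assms _ _ that] that
    by (simp add: divide_simps) (simp add: algebra_simps)
  have bound: "f 0 - f (-1) \<le> (f a - f 0) / a" if "0 < a" for a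
    using convex_on_slope_le[OF assms _ _ _ that, of "-1"] that
    by (simp add: divide_simps) (simp add: algebra_simps)
  have "((\<lambda>h. (f h - f 0) / h) \<longlongrightarrow> Inf ((\<lambda>h. (f h - f 0) / h) ` ({0<..} \<inter> UNIV)))
      (at 0 within {0<..} \<inter> UNIV)"
    by (rule Lim_right_bound[where K = "f 0 - f (-1)"])
      (use mono bound in \<open>auto simp: order_le_less\<close>)
  then show ?thesis by auto
qed

definition doubly_stochastic :: "('a::finite \<Rightarrow> 'a \<Rightarrow> real) \<Rightarrow> bool" where
  "doubly_stochastic P \<longleftrightarrow> (\<forall>i j. 0 \<le> P i j) \<and> (\<forall>i. (\<Sum>j\<in>UNIV. P i j) = 1) \<and> (\<forall>j. (\<Sum>i\<in>UNIV. P i j) = 1)"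

lemma doubly_stochastic_sum_abs_powr_le:
  fixes P :: "'a::finite \<Rightarrow> 'a \<Rightarrow> real"
  assumes "doubly_stochastic P" and "r \<ge> 1"
  shows "(\<Sum>i\<in>UNIV. \<bar>\<Sum>j\<in>UNIV. P i j * y j\<bar> powr r) \<le> (\<Sum>j\<in>UNIV. \<bar>y j\<bar> powr r)"
proof -
  have "(\<Sum>i\<in>UNIV. \<bar>\<Sum>j\<in>UNIV. P i j * y j\<bar> powr r) \<le> (\<Sum>i\<in>UNIV. \<Sum>j\<in>UNIV. P i j * \<bar>y j\<bar> powr r)"
    using convex_on_sum[OF _ UNIV_not_empty convex_on_abs_powr[OF assms(2)], of "P _" y] assms(1)
    by (intro sum_mono) (auto simp: doubly_stochastic_def)
  also have "\<dots> = (\<Sum>j\<in>UNIV. (\<Sum>i\<in>UNIV. P i j) * \<bar>y j\<bar> powr r)"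
    by (subst sum.swap) (simp add: sum_distrib_right)
  also have "\<dots> = (\<Sum>j\<in>UNIV. \<bar>y j\<bar> powr r)"
    using assms(1) by (simp add: doubly_stochastic_def)
  finally show ?thesis .
qed

lemma stochastic_row_abs_le:
  fixes p :: "'a::finite \<Rightarrow> real"
  assumes "\<And>j. 0 \<le> p j" and "(\<Sum>j\<in>UNIV. p j) = 1" and "\<And>j. \<bar>y j\<bar> \<le> M"
  shows "\<bar>\<Sum>j\<in>UNIV. p j * y j\<bar> \<le> M"
proof -
  have "\<bar>\<Sum>j\<in>UNIV. p j * y j\<bar> \<le> (\<Sum>j\<in>UNIV. p j * M)"
    using sum_abs[of "\<lambda>j. p j * y j" UNIV] sum_mono[of UNIV "\<lambda>j. \<bar>p j * y j\<bar>" "\<lambda>j. p j * M"] assms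
    by (simp add: abs_mult mult_left_mono)
  also have "\<dots> = M"
    using assms(2) by (simp flip: sum_distrib_right)
  finally show ?thesis .
qed

lemma doubly_stochastic_id_minus_laplacian:
  fixes L :: "real^'N^'N"
  assumes "transpose L = L" and "\<forall>i j. i \<noteq> j \<longrightarrow> L $ i $ j \<le> 0" and "L *v vec 1 = 0"
    and "0 \<le> t" and "\<forall>i. t * L $ i $ i \<le> 1"
  shows "doubly_stochastic (\<lambda>i j. (if i = j then 1 else 0) - t * L $ i $ j)"
proof -
  have row: "(\<Sum>j\<in>UNIV. L $ i $ j) = 0" for i
    using arg_cong[OF assms(3), of "\<lambda>v. v $ i"] by (simp add: matrix_vector_mult_def)
  moreover have "(\<Sum>i\<in>UNIV. L $ i $ j) = 0" for j
    using row[of j] arg_cong[OF assms(1), of "\<lambda>M. M $ _ $ j"] by (simp add: transpose_def)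
  moreover have "0 \<le> (if i = j then 1 else 0) - t * L $ i $ j" for i j
    using assms(2,4,5) by (auto intro: mult_nonneg_nonpos)
  ultimately show ?thesis
    by (simp add: doubly_stochastic_def sum_subtractf flip: sum_distrib_left)
qed

lemma matrix_vector_mult_diag:
  assumes "is_diag A"
  shows "(A *v w) $ k = A $ k $ k * w $ k"
proof -
  have "(A *v w) $ k = (\<Sum>l\<in>UNIV. if l = k then A $ k $ k * w $ k else 0)"
    unfolding matrix_vector_mult_def vec_lambda_beta
    by (rule sum.cong) (use assms in \<open>auto simp: is_diag_def\<close>)
  then show ?thesis by simp
qed

lemma norm_pQ_diag_finite:
  assumes "is_diag Q" and "p \<noteq> \<infinity>" and "1 \<le> p"
  shows "norm_pQ p Q w
    = (\<Sum>i\<in>UNIV. \<Sum>k\<in>UNIV. \<bar>Q $ k $ k * w $ i $ k\<bar> powr real_of_ereal p) powr (1 / real_of_ereal p)"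
proof -
  have "real_of_ereal p \<ge> 1" using assms(2,3) by (cases p) auto
  then have "((\<Sum>k\<in>UNIV. \<bar>Q $ k $ k * w $ i $ k\<bar> powr real_of_ereal p) powr (1 / real_of_ereal p))
      powr real_of_ereal p = (\<Sum>k\<in>UNIV. \<bar>Q $ k $ k * w $ i $ k\<bar> powr real_of_ereal p)" for i
    by (simp add: powr_powr sum_nonneg)
  then show ?thesis
    using assms(2) by (simp add: norm_pQ_def pnorm_def matrix_vector_mult_diag[OF assms(1)])
qed

lemma norm_pQ_diag_infinity:
  assumes "is_diag Q"
  shows "norm_pQ \<infinity> Q w = Max (range (\<lambda>i. Max (range (\<lambda>k. \<bar>Q $ k $ k * w $ i $ k\<bar>))))"
proof -
  have "0 \<le> Max (range (\<lambda>k. \<bar>Q $ k $ k * w $ i $ k\<bar>))" for i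
    by (simp add: Max_ge_iff)
  then show ?thesis
    by (simp add: norm_pQ_def pnorm_def matrix_vector_mult_diag[OF assms])
qed

lemma norm_pQ_pos:
  assumes "is_diag Q" and "\<forall>k. Q $ k $ k > 0" and "1 \<le> p" and "x \<noteq> 0"
  shows "norm_pQ p Q x > 0"
proof -
  obtain i0 k0 where "x $ i0 $ k0 \<noteq> 0"
    using assms(4) by (auto simp: vec_eq_iff)
  then have entry_pos: "\<bar>Q $ k0 $ k0 * x $ i0 $ k0\<bar> > 0"
    using assms(2) by (metis abs_of_pos mult_eq_0_iff order_less_irrefl zero_less_abs_iff)
  show ?thesis
  proof (cases "p = \<infinity>")
    case True
    have "\<bar>Q $ k0 $ k0 * x $ i0 $ k0\<bar> \<le> Max (range (\<lambda>i. Max (range (\<lambda>k. \<bar>Q $ k $ k * x $ i $ k\<bar>))))"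
      by (auto simp: Max_ge_iff)
    with entry_pos show ?thesis
      unfolding True norm_pQ_diag_infinity[OF assms(1)] by linarith
  next
    case False
    define r where "r = real_of_ereal p"
    have "0 < \<bar>Q $ k0 $ k0 * x $ i0 $ k0\<bar> powr r"
      using entry_pos by simp
    also have "\<dots> \<le> (\<Sum>k\<in>UNIV. \<bar>Q $ k $ k * x $ i0 $ k\<bar> powr r)"
      by (rule member_le_sum) auto
    also have "\<dots> \<le> (\<Sum>i\<in>UNIV. \<Sum>k\<in>UNIV. \<bar>Q $ k $ k * x $ i $ k\<bar> powr r)"
      by (rule member_le_sum) (auto intro: sum_nonneg)
    finally show ?thesis
      by (simp add: norm_pQ_diag_finite[OF assms(1) False assms(3)] flip: r_def)
  qed
qed

lemma norm_pQ_doubly_stochastic_le: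
  fixes P :: "'n::finite \<Rightarrow> 'N::finite \<Rightarrow> 'N \<Rightarrow> real" and z w :: "real^'n^'N"
  assumes "is_diag Q" and "1 \<le> p" and "\<And>k. doubly_stochastic (P k)"
    and "\<And>i k. z $ i $ k = (\<Sum>j\<in>UNIV. P k i j * w $ j $ k)"
  shows "norm_pQ p Q z \<le> norm_pQ p Q w"
proof -
  define y where "y k j = Q $ k $ k * w $ j $ k" for k j
  have mix: "Q $ k $ k * z $ i $ k = (\<Sum>j\<in>UNIV. P k i j * y k j)" for i k
    by (simp add: assms(4) y_def sum_distrib_left algebra_simps)
  show ?thesis
  proof (cases "p = \<infinity>")
    case True
    have "\<bar>y k j\<bar> \<le> norm_pQ p Q w" for k j
      by (auto simp: True norm_pQ_diag_infinity[OF assms(1)] y_def Max_ge_iff)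
    then have "\<bar>\<Sum>j\<in>UNIV. P k i j * y k j\<bar> \<le> norm_pQ p Q w" for i k
      using assms(3)[of k] by (intro stochastic_row_abs_le) (auto simp: doubly_stochastic_def)
    then show ?thesis
      by (simp add: True norm_pQ_diag_infinity[OF assms(1)] mix)
  next
    case False
    define r where "r = real_of_ereal p"
    have r: "r \<ge> 1"
      using False assms(2) by (cases p) (auto simp: r_def)
    have "(\<Sum>i\<in>UNIV. \<Sum>k\<in>UNIV. \<bar>Q $ k $ k * z $ i $ k\<bar> powr r)
        = (\<Sum>k\<in>UNIV. \<Sum>i\<in>UNIV. \<bar>\<Sum>j\<in>UNIV. P k i j * y k j\<bar> powr r)"
      by (subst sum.swap) (simp add: mix)
    also have "\<dots> \<le> (\<Sum>k\<in>UNIV. \<Sum>j\<in>UNIV. \<bar>y k j\<bar> powr r)"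
      by (intro sum_mono doubly_stochastic_sum_abs_powr_le assms(3) r)
    also have "\<dots> = (\<Sum>i\<in>UNIV. \<Sum>k\<in>UNIV. \<bar>Q $ k $ k * w $ i $ k\<bar> powr r)"
      by (subst sum.swap) (simp add: y_def)
    finally show ?thesis
      using r by (simp add: norm_pQ_diag_finite[OF assms(1) False assms(2)] powr_mono2 sum_nonneg
          flip: r_def)
  qed
qed

lemma norm_pQ_affine_right_slope_converges:
  assumes "is_diag Q" and "1 \<le> p" and "norm_pQ p Q x > 0"
  shows "\<exists>D. ((\<lambda>h. (norm_pQ p Q (x + h *\<^sub>R b) - norm_pQ p Q x) / h) \<longlongrightarrow> D) (at_right 0)"
proof (cases "p = \<infinity>")
  case True
  have "convex_on UNIV (\<lambda>h. norm_pQ p Q (x + h *\<^sub>R b))"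
    unfolding True norm_pQ_diag_infinity[OF assms(1)]
    by (simp add: algebra_simps convex_on_Max_range convex_on_comp_affine convex_on_abs_powr[of 1,
          simplified])
  from convex_on_right_slope_converges[OF this] show ?thesis by simp
next
  case False
  define r where "r = real_of_ereal p"
  have r: "r \<ge> 1"
    using False assms(2) by (cases p) (auto simp: r_def)
  define F where
    "F h = (\<Sum>i\<in>UNIV. \<Sum>k\<in>UNIV. \<bar>Q $ k $ k * x $ i $ k + h * (Q $ k $ k * b $ i $ k)\<bar> powr r)" for h
  have norm_F: "norm_pQ p Q (x + h *\<^sub>R b) = F h powr (1 / r)" for h
    by (simp add: norm_pQ_diag_finite[OF assms(1) False assms(2)] F_def algebra_simps flip: r_def)
  have "F 0 \<noteq> 0"
    using assms(3) norm_F[of 0] by auto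
  then have F0: "F 0 > 0"
    by (simp add: F_def order_less_le sum_nonneg)
  have "convex_on UNIV F"
    unfolding F_def
    by (intro convex_on_sum_fun convex_on_comp_affine convex_on_abs_powr r) auto
  then obtain D where "((\<lambda>h. (F h - F 0) / h) \<longlongrightarrow> D) (at_right 0)"
    using convex_on_right_slope_converges by blast
  then have "(F has_field_derivative D) (at 0 within {0<..})"
    by (simp add: has_field_derivative_iff)
  from DERIV_chain'[OF this has_real_derivative_powr[OF F0, of "1 / r"]]
  show ?thesis
    using norm_F[of 0] by (auto simp: norm_F has_field_derivative_iff)
qed

lemma kron_apply_diff: "kron_apply L D (u - v) = kron_apply L D u - kron_apply L D v"
  by (simp add: kron_apply_def vec_eq_iff matrix_vector_mult_diff_distrib scaleR_diff_right
      sum_subtractf)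

lemma kron_apply_constant_blocks:
  assumes "L *v vec 1 = 0"
  shows "kron_apply L D (\<chi> i. w) = 0"
proof -
  have "(\<Sum>j\<in>UNIV. L $ i $ j) = 0" for i
    using arg_cong[OF assms, of "\<lambda>v. v $ i"] by (simp add: matrix_vector_mult_def)
  then show ?thesis
    by (simp add: kron_apply_def vec_eq_iff flip: scaleR_sum_left)
qed

lemma kron_apply_Euler_step_component:
  assumes "is_diag D"
  shows "(x - h *\<^sub>R kron_apply L D x) $ i $ k
    = (\<Sum>j\<in>UNIV. ((if i = j then 1 else 0) - h * D $ k $ k * L $ i $ j) * x $ j $ k)"
proof -
  have "(x - h *\<^sub>R kron_apply L D x) $ i $ k = x $ i $ k - (\<Sum>j\<in>UNIV. h * D $ k $ k * L $ i $ j * x $ j $ k)"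
    by (simp add: kron_apply_def sum_component matrix_vector_mult_diag[OF assms] sum_distrib_left
        algebra_simps)
  also have "\<dots> = (\<Sum>j\<in>UNIV. ((if i = j then 1 else 0) - h * D $ k $ k * L $ i $ j) * x $ j $ k)"
    by (simp add: left_diff_distrib sum_subtractf if_distrib[of "\<lambda>c. c * _"] cong: if_cong)
  finally show ?thesis .
qed

lemma norm_pQ_Euler_step_le:
  assumes "is_diag D" and "\<forall>k. 0 \<le> D $ k $ k" and "is_diag Q" and "1 \<le> p"
    and "transpose L = L" and "\<forall>i j. i \<noteq> j \<longrightarrow> L $ i $ j \<le> 0" and "L *v vec 1 = 0"
    and "0 \<le> h" and "\<forall>k i. h * D $ k $ k * L $ i $ i \<le> 1"
  shows "norm_pQ p Q (x - h *\<^sub>R kron_apply L D x) \<le> norm_pQ p Q x"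
proof (rule norm_pQ_doubly_stochastic_le[OF assms(3,4)])
  show "doubly_stochastic (\<lambda>i j. (if i = j then 1 else 0) - h * D $ k $ k * L $ i $ j)" for k
    using doubly_stochastic_id_minus_laplacian[OF assms(5,6,7), of "h * D $ k $ k"] assms(2,8,9)
    by simp
qed (rule kron_apply_Euler_step_component[OF assms(1)])

lemma Lim_relative_right_slope_nonpos:
  fixes g :: "real \<Rightarrow> real"
  assumes "g 0 > 0" and "((\<lambda>h. (g h - g 0) / h) \<longlongrightarrow> D) (at_right 0)"
    and "\<forall>\<^sub>F h in at_right 0. g h \<le> g 0"
  shows "Lim (at_right 0) (\<lambda>h. (g h / g 0 - 1) / h) \<le> 0"
proof -
  have slope: "(\<lambda>h. (g h / g 0 - 1) / h) = (\<lambda>h. ((g h - g 0) / h) / g 0)"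
    using assms(1) by (auto simp: divide_simps)
  have lim: "((\<lambda>h. (g h / g 0 - 1) / h) \<longlongrightarrow> D / g 0) (at_right 0)"
    unfolding slope by (intro tendsto_divide assms(2) tendsto_const) (use assms(1) in auto)
  have "\<forall>\<^sub>F h in at_right 0. (g h / g 0 - 1) / h \<le> 0"
    using assms(3) eventually_at_right_less[of "0::real"]
    by eventually_elim (use assms(1) in \<open>auto simp: divide_simps\<close>)
  then have "D / g 0 \<le> 0"
    using tendsto_upperbound[OF lim] by simp
  then show ?thesis
    by (simp add: tendsto_Lim[OF _ lim])
qed

lemma Lim_kron_relative_slope_nonpos:
  fixes D Q :: "real^'n^'n" and L :: "real^'N^'N" and x :: "real^'n^'N"
  assumes "is_diag D" and "\<forall>k. D $ k $ k > 0" and "is_diag Q" and "\<forall>k. Q $ k $ k > 0"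
    and "1 \<le> p" and "transpose L = L" and "\<forall>i j. i \<noteq> j \<longrightarrow> L $ i $ j \<le> 0"
    and "L *v vec 1 = 0" and "x \<noteq> 0"
  shows "Lim (at_right 0) (\<lambda>h. (norm_pQ p Q (x - h *\<^sub>R kron_apply L D x) / norm_pQ p Q x - 1) / h) \<le> 0"
proof -
  define g where "g h = norm_pQ p Q (x - h *\<^sub>R kron_apply L D x)" for h
  have g0: "g 0 > 0"
    using norm_pQ_pos[OF assms(3,4,5,9)] by (simp add: g_def)
  then obtain S where "((\<lambda>h. (g h - g 0) / h) \<longlongrightarrow> S) (at_right 0)"
    using norm_pQ_affine_right_slope_converges[OF assms(3,5), of x "- kron_apply L D x"]
    by (auto simp: g_def)
  moreover have "\<forall>\<^sub>F h in at_right 0. g h \<le> g 0"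
  proof -
    have "((\<lambda>h. h * D $ k $ k * L $ i $ i) \<longlongrightarrow> 0) (at_right 0)" for k i
      by (auto intro!: tendsto_eq_intros)
    then have "\<forall>\<^sub>F h in at_right 0. h * D $ k $ k * L $ i $ i < 1" for k i
      by (rule order_tendstoD(2)) simp
    then have "\<forall>\<^sub>F h in at_right 0. \<forall>k i. h * D $ k $ k * L $ i $ i < 1"
      by (intro eventually_all_finite allI)
    then show ?thesis
      using eventually_at_right_less[of "0::real"]
      by eventually_elim (use norm_pQ_Euler_step_le[OF assms(1) _ assms(3,5-8)] assms(2)
          in \<open>force simp: g_def less_imp_le\<close>)
  qed
  ultimately show ?thesis
    using Lim_relative_right_slope_nonpos[of g, OF g0] by (simp add: g_def)
qed

theorem proposition5:
  fixes D Q :: "real^'n^'n" and L :: "real^'N^'N" and p :: ereal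
  assumes "is_diag D" and "\<forall>i. D $ i $ i > 0"
    and "is_diag Q" and "\<forall>i. Q $ i $ i > 0"
    and "1 \<le> p"
    and "transpose L = L"
    and "\<forall>i j. i \<noteq> j \<longrightarrow> L $ i $ j \<le> 0"
    and "L *v vec 1 = 0"
  shows "M_plus p Q (\<lambda>u. - kron_apply L D u) = 0"
proof -
  let ?slope = "\<lambda>u v. Lim (at_right 0) (\<lambda>h::real. (norm_pQ p Q (u - v + h *\<^sub>R
      ((- kron_apply L D u) - (- kron_apply L D v))) / norm_pQ p Q (u - v) - 1) / h)"
  have step: "u - v + h *\<^sub>R ((- kron_apply L D u) - (- kron_apply L D v))
      = (u - v) - h *\<^sub>R kron_apply L D (u - v)" for u v and h :: real
    by (simp add: kron_apply_diff algebra_simps)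
  have nonpos: "?slope u v \<le> 0" if "u \<noteq> v" for u v
    unfolding step using Lim_kron_relative_slope_nonpos[OF assms, of "u - v"] that by simp
  define one :: "real^'n^'N" where "one = (\<chi> i. vec 1)"
  have "one \<noteq> 0"
    by (simp add: one_def vec_eq_iff)
  moreover have "?slope one 0 = 0"
    unfolding step using norm_pQ_pos[OF assms(3,4,5) \<open>one \<noteq> 0\<close>]
    by (simp add: one_def kron_apply_constant_blocks[OF assms(8)] tendsto_Lim)
  ultimately have "0 \<in> {?slope u v | u v. u \<noteq> v}"
    by force
  then show ?thesis
    unfolding M_plus_def by (rule cSup_eq_maximum) (use nonpos in blast)
qed

end
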